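(* The rank-$t$ binary tensor factorization problem on an $n_1\times n_2\times\cdots\times n_s$ tensor $A=(a_{k_1,\dots,k_s})$ can be formulated as the following instance of Problem E on an $st$-partite hypergraph: $$\max_{x^{i,j}}\ \sum_{k_1\in[n_1]}\cdots\sum_{k_s\in[n_s]}\Big[(2a_{k_1,\dots,k_s}-1)\sum_{i\in[t]}\prod_{j\in[s]}x^{i,j}_{k_j}-2\sum_{i,i'\in[t],\,i<i'}\prod_{j\in[s]}x^{i,j}_{k_j}x^{i',j}_{k_j}\Big]$$ subject to $x^{i,j}\in\{0,1\}^{n_j}$ for all $i\in[t]$, $j\in[s]$, where the tensor $B$ corresponds to $B=\sum_{i\in[t]}x^{i,1}\otimes\cdots\otimes x^{i,s}$.
   Context: Rank-$t$ binary tensor factorization problem: given a rational $n_1\times\cdots\times n_s$ tensor $A$ and integer $t$, find an $n_1\times\cdots\times n_s$ tensor $B$ of binary rank $t$ (minimum $r$ with $B=\sum_{i\in[r]}c^{i,1}\otimes\cdots\otimes c^{i,s}$, $c^{i,j}\in\{0,1\}^{n_j}$) minimizing $\sum_{k_1,\dots,k_s}(a_{k_1,\dots,k_s}-b_{k_1,\dots,k_s})^2$. Problem E: maximize a polynomial $\sum_{k\in V}c_kx_k+\sum_{e\in E}c_e\prod_{k\in e}x_k$ over binary $x\in\{0,1\}^V$, given via a hypergraph $H=(V,E)$ with edges of cardinality at least two and rational coefficients. A hypergraph is $p$-partite if its node set can be partitioned into $p$ sets (sides) such that every edge contains at most one node from each side; here the sides correspond to the variable vectors $x^{i,j}$. 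*)

theory Defs
  imports Complex_Main "HOL-Library.FuncSet"
begin

(* An s-way tensor of size n_1 x ... x n_s (0-indexed: modes j < s, sizes n j)
   is a function on index tuples k, with k j < n j for j < s. *)
definition tensor_index :: "nat \<Rightarrow> (nat \<Rightarrow> nat) \<Rightarrow> (nat \<Rightarrow> nat) set" where
  "tensor_index s n = PiE {..<s} (\<lambda>j. {..<n j})"

definition sq_err :: "nat \<Rightarrow> (nat \<Rightarrow> nat) \<Rightarrow> ((nat \<Rightarrow> nat) \<Rightarrow> rat) \<Rightarrow> ((nat \<Rightarrow> nat) \<Rightarrow> rat) \<Rightarrow> rat" where
  "sq_err s n A B = (\<Sum>k\<in>tensor_index s n. (A k - B k)^2)"

(* c i j is the binary vector c^{i,j} in {0,1}^{n_j} (for i < r, j < s) *)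
definition binary_vecs :: "nat \<Rightarrow> nat \<Rightarrow> (nat \<Rightarrow> nat) \<Rightarrow> (nat \<Rightarrow> nat \<Rightarrow> nat \<Rightarrow> rat) \<Rightarrow> bool" where
  "binary_vecs r s n c \<longleftrightarrow> (\<forall>i<r. \<forall>j<s. \<forall>k<n j. c i j k \<in> {0, 1})"

definition tensor_of :: "nat \<Rightarrow> nat \<Rightarrow> (nat \<Rightarrow> nat \<Rightarrow> nat \<Rightarrow> rat) \<Rightarrow> (nat \<Rightarrow> nat) \<Rightarrow> rat" where
  "tensor_of r s c = (\<lambda>k. \<Sum>i<r. \<Prod>j<s. c i j (k j))"

definition has_binary_decomp :: "nat \<Rightarrow> nat \<Rightarrow> (nat \<Rightarrow> nat) \<Rightarrow> ((nat \<Rightarrow> nat) \<Rightarrow> rat) \<Rightarrow> bool" where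
  "has_binary_decomp r s n B \<longleftrightarrow>
     (\<exists>c. binary_vecs r s n c \<and> (\<forall>k\<in>tensor_index s n. B k = tensor_of r s c k))"

definition binary_rank :: "nat \<Rightarrow> (nat \<Rightarrow> nat) \<Rightarrow> ((nat \<Rightarrow> nat) \<Rightarrow> rat) \<Rightarrow> nat" where
  "binary_rank s n B = (LEAST r. has_binary_decomp r s n B)"

definition btf_feasible :: "nat \<Rightarrow> nat \<Rightarrow> (nat \<Rightarrow> nat) \<Rightarrow> ((nat \<Rightarrow> nat) \<Rightarrow> rat) \<Rightarrow> bool" where
  "btf_feasible t s n B \<longleftrightarrow> (\<exists>r. has_binary_decomp r s n B) \<and> binary_rank s n B \<le> t"

definition btf_optimal :: "nat \<Rightarrow> nat \<Rightarrow> (nat \<Rightarrow> nat) \<Rightarrow> ((nat \<Rightarrow> nat) \<Rightarrow> rat) \<Rightarrow> ((nat \<Rightarrow> nat) \<Rightarrow> rat) \<Rightarrow> bool" where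
  "btf_optimal t s n A B \<longleftrightarrow> btf_feasible t s n B \<and>
     (\<forall>B'. btf_feasible t s n B' \<longrightarrow> sq_err s n A B \<le> sq_err s n A B')"

definition btf_obj :: "nat \<Rightarrow> nat \<Rightarrow> (nat \<Rightarrow> nat) \<Rightarrow> ((nat \<Rightarrow> nat) \<Rightarrow> rat) \<Rightarrow> (nat \<Rightarrow> nat \<Rightarrow> nat \<Rightarrow> rat) \<Rightarrow> rat" where
  "btf_obj t s n A x = (\<Sum>k\<in>tensor_index s n.
      (2 * A k - 1) * (\<Sum>i<t. \<Prod>j<s. x i j (k j))
      - 2 * (\<Sum>i<t. \<Sum>i'\<in>{i<..<t}. \<Prod>j<s. x i j (k j) * x i' j (k j)))"

definition hypergraph :: "'v set \<Rightarrow> 'v set set \<Rightarrow> bool" where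
  "hypergraph V E \<longleftrightarrow> finite V \<and> finite E \<and> (\<forall>e\<in>E. e \<subseteq> V \<and> card e \<ge> 2)"

definition probE_obj :: "'v set \<Rightarrow> 'v set set \<Rightarrow> ('v \<Rightarrow> rat) \<Rightarrow> ('v set \<Rightarrow> rat) \<Rightarrow> ('v \<Rightarrow> rat) \<Rightarrow> rat" where
  "probE_obj V E cV cE x = (\<Sum>v\<in>V. cV v * x v) + (\<Sum>e\<in>E. cE e * (\<Prod>v\<in>e. x v))"

definition p_partite :: "nat \<Rightarrow> 'v set \<Rightarrow> 'v set set \<Rightarrow> bool" where
  "p_partite p V E \<longleftrightarrow> (\<exists>side :: 'v \<Rightarrow> nat. side ` V \<subseteq> {..<p} \<and> (\<forall>e\<in>E. inj_on side e))"

(* node set: variables x^{i,j}_k, i < t, j < s, k < n_j *)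
definition btf_nodes :: "nat \<Rightarrow> nat \<Rightarrow> (nat \<Rightarrow> nat) \<Rightarrow> (nat \<times> nat \<times> nat) set" where
  "btf_nodes t s n = {(i, j, k). i < t \<and> j < s \<and> k < n j}"

end

theory Submission
  imports Defs
begin

text \<open>For binary vectors each product p_i = x^{i,1}_{k_1} ... x^{i,s}_{k_s} is 0 or 1, so
  (\<Sum>_i p_i)^2 = \<Sum>_i p_i + 2 \<Sum>_{i<i'} p_i p_i', and the objective equals
  \<Sum>_k a_k^2 - ||A - B||^2 for B = \<Sum>_i x^{i,1} (x) ... (x) x^{i,s}. Padding a decomposition with zero
  vectors (a zero vector kills a rank-one term only when s \<ge> 1) shows that these B are exactly the
  tensors of binary rank at most t, so maximisers of the objective are optimal factorisations.
  Expanded into monomials, the objective has at each entry k one monomial per rank-one term and one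
  per pair of rank-one terms; each is supported on the nodes x^{i,j}_{k_j} of at most two terms and
  hence meets every side (i, j) at most once. Singleton supports give the linear part of Problem E,
  the other supports its hyperedges.\<close>

lemma square_sum_lessThan:
  fixes p :: "nat \<Rightarrow> 'a::comm_semiring_1"
  shows "(\<Sum>i<t. p i)^2 = (\<Sum>i<t. p i^2) + 2 * (\<Sum>i<t. \<Sum>i'\<in>{i<..<t}. p i * p i')"
proof (induction t)
  case 0
  then show ?case by simp
next
  case (Suc t)
  have "{t<..<Suc t} = {}"
    by auto
  then have "(\<Sum>i<Suc t. \<Sum>i'\<in>{i<..<Suc t}. p i * p i')
      = (\<Sum>i<t. \<Sum>i'\<in>{i<..<Suc t}. p i * p i')"
    by simp
  also have "\<dots> = (\<Sum>i<t. \<Sum>i'\<in>insert t {i<..<t}. p i * p i')"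
    by (intro sum.cong) auto
  also have "\<dots> = (\<Sum>i<t. (\<Sum>i'\<in>{i<..<t}. p i * p i') + p i * p t)"
    by (simp add: add.commute)
  also have "\<dots> = (\<Sum>i<t. \<Sum>i'\<in>{i<..<t}. p i * p i') + (\<Sum>i<t. p i) * p t"
    by (simp add: sum.distrib sum_distrib_right)
  finally have cross: "(\<Sum>i<Suc t. \<Sum>i'\<in>{i<..<Suc t}. p i * p i')
      = (\<Sum>i<t. \<Sum>i'\<in>{i<..<t}. p i * p i') + (\<Sum>i<t. p i) * p t" .
  show ?case
    unfolding cross using Suc.IH by (simp add: power2_sum algebra_simps)
qed

lemma prod_zero_one:
  fixes f :: "'b \<Rightarrow> 'a::comm_semiring_1"
  assumes "\<forall>j\<in>J. f j \<in> {0, 1}"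
  shows "prod f J \<in> {0, 1}"
proof (cases "finite J")
  case True
  then show ?thesis
    using assms by (induction J rule: finite_induct) auto
qed simp

lemma square_error_binary_sum:
  fixes a :: "'a::comm_ring_1" and p :: "nat \<Rightarrow> 'a"
  assumes "\<forall>i<t. p i \<in> {0, 1}"
  shows "(2 * a - 1) * (\<Sum>i<t. p i) - 2 * (\<Sum>i<t. \<Sum>i'\<in>{i<..<t}. p i * p i')
    = a^2 - (a - (\<Sum>i<t. p i))^2"
proof -
  have "(\<Sum>i<t. p i^2) = (\<Sum>i<t. p i)"
    using assms by (intro sum.cong) auto
  then show ?thesis
    using square_sum_lessThan[where p = p and t = t] by (simp add: power2_eq_square algebra_simps)
qed

lemma btf_obj_eq_sq_err:
  assumes "binary_vecs t s n x"
  shows "btf_obj t s n A x = (\<Sum>k\<in>tensor_index s n. (A k)^2) - sq_err s n A (tensor_of t s x)"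
proof -
  have "(2 * A k - 1) * (\<Sum>i<t. \<Prod>j<s. x i j (k j))
      - 2 * (\<Sum>i<t. \<Sum>i'\<in>{i<..<t}. \<Prod>j<s. x i j (k j) * x i' j (k j))
      = (A k)^2 - (A k - tensor_of t s x k)^2" if k: "k \<in> tensor_index s n" for k
  proof -
    have "\<forall>i<t. (\<Prod>j<s. x i j (k j)) \<in> {0, 1}"
      using assms k unfolding binary_vecs_def tensor_index_def
      by (intro allI impI prod_zero_one) auto
    then show ?thesis
      using square_error_binary_sum[of t "\<lambda>i. \<Prod>j<s. x i j (k j)" "A k"]
      by (simp add: tensor_of_def prod.distrib)
  qed
  then show ?thesis
    unfolding btf_obj_def sq_err_def by (simp add: sum_subtractf[symmetric])
qed

lemma has_binary_decomp_mono:
  assumes "s \<ge> 1" "r \<le> t" "has_binary_decomp r s n B"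
  shows "has_binary_decomp t s n B"
proof -
  obtain c where c: "binary_vecs r s n c" "\<forall>k\<in>tensor_index s n. B k = tensor_of r s c k"
    using assms(3) unfolding has_binary_decomp_def by blast
  define c' where "c' i = (if i < r then c i else (\<lambda>_ _. 0))" for i
  have "(\<Prod>j<s. c' i j (k j)) = 0" if "r \<le> i" for i k
    using that assms(1) by (intro prod_zero bexI[of _ 0]) (auto simp: c'_def)
  then have "tensor_of t s c' k = tensor_of r s c k" for k
    unfolding tensor_of_def using assms(2)
    by (subst sum.mono_neutral_left[of "{..<t}" "{..<r}", symmetric]) (auto simp: c'_def)
  moreover have "binary_vecs t s n c'"
    using c(1) by (simp add: binary_vecs_def c'_def)
  ultimately show ?thesis
    using c(2) unfolding has_binary_decomp_def by auto
qed

lemma btf_feasible_iff_has_binary_decomp: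
  assumes "s \<ge> 1"
  shows "btf_feasible t s n B \<longleftrightarrow> has_binary_decomp t s n B"
proof
  assume "btf_feasible t s n B"
  then have "has_binary_decomp (binary_rank s n B) s n B" "binary_rank s n B \<le> t"
    unfolding btf_feasible_def binary_rank_def by (auto intro: LeastI_ex)
  then show "has_binary_decomp t s n B"
    using assms has_binary_decomp_mono by blast
next
  assume "has_binary_decomp t s n B"
  then show "btf_feasible t s n B"
    unfolding btf_feasible_def binary_rank_def by (auto intro: Least_le)
qed

lemma sq_err_cong:
  assumes "\<forall>k\<in>tensor_index s n. B k = B' k"
  shows "sq_err s n A B = sq_err s n A B'"
  unfolding sq_err_def using assms by (intro sum.cong) auto

lemma btf_maximizer_iff_optimal:
  assumes "s \<ge> 1" "binary_vecs t s n x"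
  shows "(\<forall>x'. binary_vecs t s n x' \<longrightarrow> btf_obj t s n A x' \<le> btf_obj t s n A x)
    \<longleftrightarrow> btf_optimal t s n A (tensor_of t s x)"
proof -
  have "btf_optimal t s n A (tensor_of t s x) \<longleftrightarrow> (\<forall>x'. binary_vecs t s n x' \<longrightarrow>
      sq_err s n A (tensor_of t s x) \<le> sq_err s n A (tensor_of t s x'))"
    using assms sq_err_cong[of s n _ _ A]
    unfolding btf_optimal_def btf_feasible_iff_has_binary_decomp[OF assms(1)] has_binary_decomp_def
    by (metis (no_types, lifting))
  then show ?thesis
    using btf_obj_eq_sq_err[of t s n _ A] assms(2) by auto
qed

lemma probE_obj_of_monomials:
  fixes c :: "'a \<Rightarrow> rat" and S :: "'a \<Rightarrow> 'v set"
  assumes "finite V" "finite T" and S: "\<And>\<tau>. \<tau> \<in> T \<Longrightarrow> S \<tau> \<subseteq> V \<and> S \<tau> \<noteq> {}"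
  shows "probE_obj V {e \<in> S ` T. 2 \<le> card e}
      (\<lambda>v. \<Sum>\<tau> | \<tau> \<in> T \<and> S \<tau> = {v}. c \<tau>) (\<lambda>e. \<Sum>\<tau> | \<tau> \<in> T \<and> S \<tau> = e. c \<tau>) x
    = (\<Sum>\<tau>\<in>T. c \<tau> * (\<Prod>v\<in>S \<tau>. x v))"
proof -
  define cE where "cE e = (\<Sum>\<tau> | \<tau> \<in> T \<and> S \<tau> = e. c \<tau>)" for e
  define E where "E = {e \<in> S ` T. 2 \<le> card e}"
  define U where "U = (\<lambda>v. {v}) ` V"
  have "S \<tau> \<in> U \<union> E" if "\<tau> \<in> T" for \<tau>
  proof -
    have "card (S \<tau>) \<noteq> 0"
      using S[OF that] assms(1) finite_subset by fastforce
    then have "card (S \<tau>) = 1 \<or> 2 \<le> card (S \<tau>)"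
      by linarith
    then show ?thesis
      using S[OF that] that by (auto simp: U_def E_def card_1_singleton_iff)
  qed
  then have ST: "S ` T \<subseteq> U \<union> E"
    by blast
  have fin: "finite (U \<union> E)"
    using assms(1,2) by (simp add: U_def E_def)
  have disj: "U \<inter> E = {}"
    by (auto simp: U_def E_def)
  have "(\<Sum>\<tau>\<in>T. c \<tau> * (\<Prod>v\<in>S \<tau>. x v))
      = (\<Sum>e\<in>U \<union> E. \<Sum>\<tau> | \<tau> \<in> T \<and> S \<tau> = e. c \<tau> * (\<Prod>v\<in>S \<tau>. x v))"
    by (rule sum.group[OF assms(2) fin ST, symmetric])
  also have "\<dots> = (\<Sum>e\<in>U \<union> E. cE e * (\<Prod>v\<in>e. x v))"
    unfolding cE_def sum_distrib_right by (intro sum.cong) auto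
  also have "\<dots> = (\<Sum>e\<in>U. cE e * (\<Prod>v\<in>e. x v)) + (\<Sum>e\<in>E. cE e * (\<Prod>v\<in>e. x v))"
    using fin disj by (intro sum.union_disjoint) auto
  also have "(\<Sum>e\<in>U. cE e * (\<Prod>v\<in>e. x v)) = (\<Sum>v\<in>V. cE {v} * x v)"
    unfolding U_def by (subst sum.reindex) (auto simp: inj_on_def)
  finally show ?thesis
    unfolding probE_obj_def cE_def E_def by simp
qed

lemma inj_on_mult_add:
  fixes m :: nat
  shows "inj_on (\<lambda>(i, j). i * m + j) (UNIV \<times> {..<m})"
proof (rule inj_onI, clarsimp)
  fix i j i' j' :: nat
  assume "j < m" "j' < m" "i * m + j = i' * m + j'"
  then have "(i * m + j) div m = (i' * m + j') div m" "(i * m + j) mod m = (i' * m + j') mod m"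
    by simp_all
  with \<open>j < m\<close> \<open>j' < m\<close> show "i = i' \<and> j = j'"
    by simp
qed

lemma btf_nodes_eq_Sigma:
  "btf_nodes t s n = {..<t} \<times> Sigma {..<s} (\<lambda>j. {..<n j})"
  by (auto simp: btf_nodes_def)

lemma finite_btf_nodes: "finite (btf_nodes t s n)"
  by (simp add: btf_nodes_eq_Sigma)

lemma p_partite_btf_nodes:
  assumes "\<forall>e\<in>E. e \<subseteq> btf_nodes t s n \<and> inj_on (\<lambda>(i, j, k). (i, j)) e"
  shows "p_partite (s * t) (btf_nodes t s n) E"
  unfolding p_partite_def
proof (intro exI conjI ballI)
  let ?side = "\<lambda>(i, j, k :: nat). i * s + j"
  show "?side ` btf_nodes t s n \<subseteq> {..<s * t}"
  proof (clarsimp simp: btf_nodes_def)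
    fix i j :: nat
    assume "i < t" "j < s"
    then have "i * s + j < (i + 1) * s" by simp
    also have "\<dots> \<le> t * s" using \<open>i < t\<close> by (intro mult_le_mono1) simp
    finally show "i * s + j < s * t" by (simp add: mult.commute)
  qed
  fix e
  assume "e \<in> E"
  then have "e \<subseteq> btf_nodes t s n" "inj_on (\<lambda>(i, j, k). (i, j)) e"
    using assms by auto
  moreover from this(1) have "(\<lambda>(i, j, k). (i, j)) ` e \<subseteq> UNIV \<times> {..<s}"
    by (auto simp: btf_nodes_def)
  ultimately have "inj_on ((\<lambda>(i, j). i * s + j) \<circ> (\<lambda>(i, j, k). (i, j))) e"
    by (intro comp_inj_on inj_on_subset[OF inj_on_mult_add])
  then show "inj_on ?side e"
    by (simp add: comp_def case_prod_beta')
qed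

definition btf_entry_nodes :: "nat \<Rightarrow> nat \<Rightarrow> (nat \<Rightarrow> nat) \<Rightarrow> (nat \<times> nat \<times> nat) set" where
  "btf_entry_nodes s i k = (\<lambda>j. (i, j, k j)) ` {..<s}"

text \<open>A term (k, i, i) stands for the linear monomial (2 a_k - 1) p_i of the objective at entry k,
  a term (k, i, i') with i < i' for the quadratic monomial -2 p_i p_i'.\<close>

definition btf_terms :: "nat \<Rightarrow> nat \<Rightarrow> (nat \<Rightarrow> nat) \<Rightarrow> ((nat \<Rightarrow> nat) \<times> nat \<times> nat) set" where
  "btf_terms t s n = tensor_index s n \<times> Sigma {..<t} (\<lambda>i. {i..<t})"

definition btf_support :: "nat \<Rightarrow> (nat \<Rightarrow> nat) \<times> nat \<times> nat \<Rightarrow> (nat \<times> nat \<times> nat) set" where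
  "btf_support s = (\<lambda>(k, i, i'). btf_entry_nodes s i k \<union> btf_entry_nodes s i' k)"

definition btf_coeff :: "((nat \<Rightarrow> nat) \<Rightarrow> rat) \<Rightarrow> (nat \<Rightarrow> nat) \<times> nat \<times> nat \<Rightarrow> rat" where
  "btf_coeff A = (\<lambda>(k, i, i'). if i = i' then 2 * A k - 1 else -2)"

lemma finite_btf_entry_nodes [simp]: "finite (btf_entry_nodes s i k)"
  by (simp add: btf_entry_nodes_def)

lemma prod_btf_entry_nodes:
  "(\<Prod>v\<in>btf_entry_nodes s i k. x v) = (\<Prod>j<s. x (i, j, k j))"
  by (simp add: btf_entry_nodes_def prod.reindex inj_on_def)

lemma prod_btf_support_diagonal:
  "(\<Prod>v\<in>btf_support s (k, i, i). x v) = (\<Prod>j<s. x (i, j, k j))"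
  by (simp add: btf_support_def prod_btf_entry_nodes)

lemma prod_btf_support_off_diagonal:
  assumes "i \<noteq> i'"
  shows "(\<Prod>v\<in>btf_support s (k, i, i'). x v) = (\<Prod>j<s. x (i, j, k j) * x (i', j, k j))"
proof -
  have "btf_entry_nodes s i k \<inter> btf_entry_nodes s i' k = {}"
    using assms by (auto simp: btf_entry_nodes_def)
  then show ?thesis
    by (simp add: btf_support_def prod.union_disjoint prod_btf_entry_nodes prod.distrib)
qed

lemma btf_obj_eq_sum_monomials:
  "btf_obj t s n A (\<lambda>i j k. x (i, j, k))
    = (\<Sum>\<tau>\<in>btf_terms t s n. btf_coeff A \<tau> * (\<Prod>v\<in>btf_support s \<tau>. x v))"
proof -
  define m where "m k i i' = btf_coeff A (k, i, i') * (\<Prod>v\<in>btf_support s (k, i, i'). x v)"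
    for k i i'
  have "(\<Sum>(i, i')\<in>Sigma {..<t} (\<lambda>i. {i..<t}). m k i i')
      = (2 * A k - 1) * (\<Sum>i<t. \<Prod>j<s. x (i, j, k j))
        - 2 * (\<Sum>i<t. \<Sum>i'\<in>{i<..<t}. \<Prod>j<s. x (i, j, k j) * x (i', j, k j))"
    for k
  proof -
    have off_diagonal: "(\<Sum>i'\<in>{i<..<t}. m k i i')
        = - 2 * (\<Sum>i'\<in>{i<..<t}. \<Prod>j<s. x (i, j, k j) * x (i', j, k j))" for i
      unfolding m_def sum_distrib_left
      by (intro sum.cong) (auto simp: btf_coeff_def prod_btf_support_off_diagonal)
    have "(\<Sum>(i, i')\<in>Sigma {..<t} (\<lambda>i. {i..<t}). m k i i')
        = (\<Sum>i<t. \<Sum>i'\<in>insert i {i<..<t}. m k i i')"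
      by (subst sum.Sigma[symmetric]) (auto simp: ivl_disj_un_singleton(3)[symmetric] intro!: sum.cong)
    also have "\<dots> = (\<Sum>i<t. (2 * A k - 1) * (\<Prod>j<s. x (i, j, k j))
        - 2 * (\<Sum>i'\<in>{i<..<t}. \<Prod>j<s. x (i, j, k j) * x (i', j, k j)))"
      by (simp add: off_diagonal) (simp add: m_def btf_coeff_def prod_btf_support_diagonal)
    finally show ?thesis
      by (simp add: sum_subtractf sum_distrib_left)
  qed
  then show ?thesis
    unfolding btf_obj_def btf_terms_def by (simp add: m_def sum.cartesian_product')
qed

lemma btf_support_subset_nodes:
  assumes "\<tau> \<in> btf_terms t s n"
  shows "btf_support s \<tau> \<subseteq> btf_nodes t s n"
proof -
  obtain k i i' where "\<tau> = (k, i, i')" "k \<in> tensor_index s n" "i < t" "i' < t"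
    using assms by (auto simp: btf_terms_def)
  moreover have "btf_entry_nodes s a k \<subseteq> btf_nodes t s n" if "a < t" "k \<in> tensor_index s n" for a k
    using that by (auto simp: btf_entry_nodes_def btf_nodes_def tensor_index_def PiE_iff)
  ultimately show ?thesis
    by (simp add: btf_support_def)
qed

lemma btf_support_nonempty:
  assumes "s \<ge> 1"
  shows "btf_support s \<tau> \<noteq> {}"
proof -
  obtain k i i' where "\<tau> = (k, i, i')"
    by (cases \<tau>) auto
  moreover have "(i, 0, k 0) \<in> btf_entry_nodes s i k"
    using assms by (auto simp: btf_entry_nodes_def)
  ultimately show ?thesis
    by (auto simp: btf_support_def)
qed

lemma inj_on_btf_support:
  "inj_on (\<lambda>(i, j, k). (i, j)) (btf_support s \<tau>)"
proof -
  obtain k i i' where "\<tau> = (k, i, i')"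
    by (cases \<tau>) auto
  then have "btf_support s \<tau> \<subseteq> {(a, j, k j) | a j. True}"
    by (auto simp: btf_support_def btf_entry_nodes_def)
  then show ?thesis
    by (rule inj_on_subset[rotated]) (auto simp: inj_on_def)
qed

lemma finite_btf_terms: "finite (btf_terms t s n)"
  by (simp add: btf_terms_def tensor_index_def finite_PiE)

lemma btf_obj_probE_instance:
  assumes "s \<ge> 1"
  shows "\<exists>E cV cE. hypergraph (btf_nodes t s n) E
    \<and> p_partite (s * t) (btf_nodes t s n) E
    \<and> (\<forall>e\<in>E. inj_on (\<lambda>(i, j, k). (i, j)) e)
    \<and> (\<forall>x. probE_obj (btf_nodes t s n) E cV cE x = btf_obj t s n A (\<lambda>i j k. x (i, j, k)))"
proof (intro exI conjI allI)
  let ?E = "{e \<in> btf_support s ` btf_terms t s n. 2 \<le> card e}"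
  have edges: "e \<subseteq> btf_nodes t s n \<and> inj_on (\<lambda>(i, j, k). (i, j)) e" if "e \<in> ?E" for e
    using that btf_support_subset_nodes inj_on_btf_support by blast
  then show "hypergraph (btf_nodes t s n) ?E"
    by (auto simp: hypergraph_def finite_btf_nodes finite_btf_terms)
  show "p_partite (s * t) (btf_nodes t s n) ?E"
    using edges by (intro p_partite_btf_nodes) blast
  show "\<forall>e\<in>?E. inj_on (\<lambda>(i, j, k). (i, j)) e"
    using edges by blast
  fix x :: "nat \<times> nat \<times> nat \<Rightarrow> rat"
  show "probE_obj (btf_nodes t s n) ?E
      (\<lambda>v. \<Sum>\<tau> | \<tau> \<in> btf_terms t s n \<and> btf_support s \<tau> = {v}. btf_coeff A \<tau>)
      (\<lambda>e. \<Sum>\<tau> | \<tau> \<in> btf_terms t s n \<and> btf_support s \<tau> = e. btf_coeff A \<tau>) x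
    = btf_obj t s n A (\<lambda>i j k. x (i, j, k))"
    unfolding btf_obj_eq_sum_monomials
    using assms finite_btf_nodes finite_btf_terms btf_support_subset_nodes btf_support_nonempty
    by (intro probE_obj_of_monomials) auto
qed

theorem proposition3:
  fixes t s :: nat and n :: "nat \<Rightarrow> nat" and A :: "(nat \<Rightarrow> nat) \<Rightarrow> rat"
  assumes "s \<ge> 1"
  shows
    \<comment> \<open>feasible tensors B are exactly those of the form sum_i x^{i,1} (x) ... (x) x^{i,s}\<close>
    "(\<forall>B. btf_feasible t s n B \<longleftrightarrow>
        (\<exists>x. binary_vecs t s n x \<and> (\<forall>k\<in>tensor_index s n. B k = tensor_of t s x k)))
   \<and> \<comment> \<open>the objective equals the constant sum a^2 minus the squared error of B\<close>
     (\<forall>x. binary_vecs t s n x \<longrightarrow>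
        btf_obj t s n A x = (\<Sum>k\<in>tensor_index s n. (A k)^2) - sq_err s n A (tensor_of t s x))
   \<and> \<comment> \<open>hence maximizers correspond to optimal factorizations\<close>
     (\<forall>x. binary_vecs t s n x \<longrightarrow>
        ((\<forall>x'. binary_vecs t s n x' \<longrightarrow> btf_obj t s n A x' \<le> btf_obj t s n A x)
          \<longleftrightarrow> btf_optimal t s n A (tensor_of t s x)))
   \<and> \<comment> \<open>and the objective is an instance of Problem E on an st-partite hypergraph with sides x^{i,j}\<close>
     (\<exists>E cV cE. hypergraph (btf_nodes t s n) E
        \<and> p_partite (s * t) (btf_nodes t s n) E
        \<and> (\<forall>e\<in>E. inj_on (\<lambda>(i, j, k). (i, j)) e)
        \<and> (\<forall>x. (\<forall>v\<in>btf_nodes t s n. x v \<in> {0, 1}) \<longrightarrow>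
              probE_obj (btf_nodes t s n) E cV cE x = btf_obj t s n A (\<lambda>i j k. x (i, j, k))))"
proof (intro conjI allI impI)
  show "btf_feasible t s n B \<longleftrightarrow>
      (\<exists>x. binary_vecs t s n x \<and> (\<forall>k\<in>tensor_index s n. B k = tensor_of t s x k))" for B
    using btf_feasible_iff_has_binary_decomp[OF assms] unfolding has_binary_decomp_def .
  show "btf_obj t s n A x = (\<Sum>k\<in>tensor_index s n. (A k)^2) - sq_err s n A (tensor_of t s x)"
    if "binary_vecs t s n x" for x
    using that by (rule btf_obj_eq_sq_err)
  show "(\<forall>x'. binary_vecs t s n x' \<longrightarrow> btf_obj t s n A x' \<le> btf_obj t s n A x)
      \<longleftrightarrow> btf_optimal t s n A (tensor_of t s x)" if "binary_vecs t s n x" for x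
    using assms that by (rule btf_maximizer_iff_optimal)
  show "\<exists>E cV cE. hypergraph (btf_nodes t s n) E
      \<and> p_partite (s * t) (btf_nodes t s n) E
      \<and> (\<forall>e\<in>E. inj_on (\<lambda>(i, j, k). (i, j)) e)
      \<and> (\<forall>x. (\<forall>v\<in>btf_nodes t s n. x v \<in> {0, 1}) \<longrightarrow>
            probE_obj (btf_nodes t s n) E cV cE x = btf_obj t s n A (\<lambda>i j k. x (i, j, k)))"
    using btf_obj_probE_instance[OF assms, of t n A] by metis
qed

end
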